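(* Let $(\mathcal M,\omega)$ be a $2n$-dimensional symplectic manifold with local coordinates $q^1,\dots,q^{2n}$, equipped with a Weyl-type $*$-product, trace density $t$ and Stratonovich–Weyl correspondence as described in the context. A function $W=W(q^1,\dots,q^{2n})$ in the algebra $\mathcal A$ represents a pure quantum state if and only if: (i) $\int_{\mathcal M}W^{*2}\,t\,\omega^n=\frac{1}{(2\pi\hbar)^n}$; (ii) $W$ is real; (iii) $W^{*2}=\frac{1}{(2\pi\hbar)^n}W$; (iv) $\int_{\mathcal M}W\,t\,\omega^n=1$.
   Context: Setting: $\mathcal H$ is a separable Hilbert space and $\mathcal A_{\mathcal H}$ an algebra of operators on it; $\mathcal A$ is an algebra of smooth complex functions on the symplectic manifold $(\mathcal M,\omega)$ with product a (local, Weyl-type) $*$-product, understood in an integral form when needed, and involution complex conjugation; $W^{*2}=W*W$. The trace density $t=\sum_i\hbar^it_i$ is the real function such that every state functional has the form $A\mapsto\int_{\mathcal M}A*W\,t\,\omega^n$. The Stratonovich–Weyl correspondence $SW:\mathcal A_{\mathcal H}\to\mathcal A$ is a linear bijection with $SW(\hat A^+)=\overline{SW(\hat A)}$, $SW(\hat1)=1$, $SW(\hat A\hat B)=SW(\hat A)*SW(\hat B)$, self-adjoint operators mapped to real functions, and $\mathrm{Tr}\hat A=\frac{1}{(2\pi\hbar)^n}\int_{\mathcal M}SW(\hat A)\,t\,\omega^n$. A function represents a pure state if it equals $SW\big(\frac{1}{(2\pi\hbar)^n}\hat\varrho\big)$ for a density operator $\hat\varrho$ on $\mathcal H$ that is a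 rank-one orthogonal projection. *)

theory Defs
  imports "HOL-Analysis.Analysis"
begin

text \<open>Separable complex Hilbert space, concretely as l2(J) for an index set J of naturals
  (every separable Hilbert space is unitarily isomorphic to such a space).\<close>

definition l2 :: "nat set \<Rightarrow> (nat \<Rightarrow> complex) set" where
  "l2 J = {\<psi>. (\<forall>i. i \<notin> J \<longrightarrow> \<psi> i = 0) \<and> (\<lambda>i. (cmod (\<psi> i))\<^sup>2) summable_on J}"

definition cinner :: "nat set \<Rightarrow> (nat \<Rightarrow> complex) \<Rightarrow> (nat \<Rightarrow> complex) \<Rightarrow> complex" where
  "cinner J \<phi> \<psi> = (\<Sum>\<^sub>\<infinity>i\<in>J. cnj (\<phi> i) * \<psi> i)"

definition hnorm :: "nat set \<Rightarrow> (nat \<Rightarrow> complex) \<Rightarrow> real" where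
  "hnorm J \<psi> = sqrt (Re (cinner J \<psi> \<psi>))"

definition basis_vec :: "nat \<Rightarrow> (nat \<Rightarrow> complex)" where
  "basis_vec j = (\<lambda>i. if i = j then 1 else 0)"

type_synonym op = "(nat \<Rightarrow> complex) \<Rightarrow> (nat \<Rightarrow> complex)"

definition extensional_op :: "nat set \<Rightarrow> op \<Rightarrow> bool" where
  "extensional_op J A \<longleftrightarrow> (\<forall>\<phi>. \<phi> \<notin> l2 J \<longrightarrow> A \<phi> = (\<lambda>_. 0)) \<and> (\<forall>\<phi>\<in>l2 J. A \<phi> \<in> l2 J)"

definition linear_op :: "nat set \<Rightarrow> op \<Rightarrow> bool" where
  "linear_op J A \<longleftrightarrow> (\<forall>\<phi>\<in>l2 J. \<forall>\<psi>\<in>l2 J. \<forall>a b::complex.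
      A (\<lambda>i. a * \<phi> i + b * \<psi> i) = (\<lambda>i. a * A \<phi> i + b * A \<psi> i))"

definition id_op :: "nat set \<Rightarrow> op" where
  "id_op J = (\<lambda>\<phi>. if \<phi> \<in> l2 J then \<phi> else (\<lambda>_. 0))"

definition add_op :: "op \<Rightarrow> op \<Rightarrow> op" where
  "add_op A B = (\<lambda>\<phi> i. A \<phi> i + B \<phi> i)"

definition smult_op :: "complex \<Rightarrow> op \<Rightarrow> op" where
  "smult_op c A = (\<lambda>\<phi> i. c * A \<phi> i)"

definition is_adjoint :: "nat set \<Rightarrow> op \<Rightarrow> op \<Rightarrow> bool" where
  "is_adjoint J A B \<longleftrightarrow> (\<forall>x\<in>l2 J. \<forall>y\<in>l2 J. cinner J (A x) y = cinner J x (B y))"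

definition op_trace :: "nat set \<Rightarrow> op \<Rightarrow> complex" where
  "op_trace J A = (\<Sum>\<^sub>\<infinity>j\<in>J. cinner J (basis_vec j) (A (basis_vec j)))"

definition rank_one_projection :: "nat set \<Rightarrow> op \<Rightarrow> bool" where
  "rank_one_projection J P \<longleftrightarrow> (\<exists>\<psi>\<in>l2 J. hnorm J \<psi> = 1 \<and>
      P = (\<lambda>\<phi>. if \<phi> \<in> l2 J then (\<lambda>i. cinner J \<psi> \<phi> * \<psi> i) else (\<lambda>_. 0)))"

definition density_operator :: "nat set \<Rightarrow> op \<Rightarrow> bool" where
  "density_operator J R \<longleftrightarrow> is_adjoint J R R \<and>
      (\<forall>x\<in>l2 J. Im (cinner J x (R x)) = 0 \<and> Re (cinner J x (R x)) \<ge> 0) \<and> op_trace J R = 1"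

text \<open>Standing assumptions: operator algebra AH on l2 J, function algebra FA on the
  phase space 'm with star product, integration against omega^n given by the measure mu,
  trace density t, Planck constant h > 0, half-dimension n, Stratonovich-Weyl map SW.\<close>
definition SW_setting ::
  "nat set \<Rightarrow> op set \<Rightarrow> ('m \<Rightarrow> complex) set \<Rightarrow>
   (('m \<Rightarrow> complex) \<Rightarrow> ('m \<Rightarrow> complex) \<Rightarrow> ('m \<Rightarrow> complex)) \<Rightarrow>
   'm measure \<Rightarrow> ('m \<Rightarrow> real) \<Rightarrow> real \<Rightarrow> nat \<Rightarrow> (op \<Rightarrow> ('m \<Rightarrow> complex)) \<Rightarrow> bool" where
  "SW_setting J AH FA star \<mu> t h n SW \<longleftrightarrow>
     h > 0 \<and>
     \<comment> \<open>AH is an algebra of (linear, extensional) operators on the Hilbert space\<close>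
     (\<forall>A\<in>AH. extensional_op J A \<and> linear_op J A) \<and>
     id_op J \<in> AH \<and>
     (\<forall>A\<in>AH. \<forall>B\<in>AH. add_op A B \<in> AH \<and> A \<circ> B \<in> AH) \<and>
     (\<forall>c. \<forall>A\<in>AH. smult_op c A \<in> AH) \<and>
     (\<forall>A\<in>AH. \<exists>B\<in>AH. is_adjoint J A B) \<and>
     \<comment> \<open>Stratonovich-Weyl correspondence\<close>
     bij_betw SW AH FA \<and>
     (\<forall>A\<in>AH. \<forall>B\<in>AH. SW (add_op A B) = (\<lambda>x. SW A x + SW B x)) \<and>
     (\<forall>c. \<forall>A\<in>AH. SW (smult_op c A) = (\<lambda>x. c * SW A x)) \<and>
     (\<forall>A\<in>AH. \<forall>B\<in>AH. is_adjoint J A B \<longrightarrow> SW B = (\<lambda>x. cnj (SW A x))) \<and>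
     SW (id_op J) = (\<lambda>_. 1) \<and>
     (\<forall>A\<in>AH. \<forall>B\<in>AH. SW (A \<circ> B) = star (SW A) (SW B)) \<and>
     (\<forall>A\<in>AH. is_adjoint J A A \<longrightarrow> (\<forall>x. Im (SW A x) = 0)) \<and>
     (\<forall>A\<in>AH. op_trace J A =
        (1 / (2 * pi * h) ^ n) * (LINT x|\<mu>. SW A x * complex_of_real (t x)))"

definition represents_pure_state ::
  "nat set \<Rightarrow> op set \<Rightarrow> real \<Rightarrow> nat \<Rightarrow> (op \<Rightarrow> ('m \<Rightarrow> complex)) \<Rightarrow> ('m \<Rightarrow> complex) \<Rightarrow> bool" where
  "represents_pure_state J AH h n SW W \<longleftrightarrow>
     (\<exists>\<rho>\<in>AH. density_operator J \<rho> \<and> rank_one_projection J \<rho> \<and>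
        W = SW (smult_op (complex_of_real (1 / (2 * pi * h) ^ n)) \<rho>))"

end

theory Submission
  imports Defs
begin

text \<open>Write \<open>W = SW (\<kappa> \<rho>)\<close> with \<open>\<kappa> = (2\<pi>\<hbar>)\<^sup>-\<^sup>n\<close>. Since \<open>SW\<close> is an injective
  \<open>*\<close>-algebra morphism, conditions (ii), (iii) and (iv) say exactly that \<open>\<rho>\<close> is self-adjoint,
  idempotent and of trace one, and (i) follows from (iii) and (iv). A self-adjoint idempotent is
  positive because \<open>\<langle>x, \<rho> x\<rangle> = \<parallel>\<rho> x\<parallel>\<^sup>2\<close>, so it remains to see that an orthogonal projection
  of trace one has rank one: for a unit vector \<open>\<psi>\<close> in its range, Bessel's inequality gives
  \<open>\<langle>e\<^sub>i, \<rho> e\<^sub>i\<rangle> = \<parallel>\<rho> e\<^sub>i\<parallel>\<^sup>2 \<ge> |\<psi>\<^sub>i|\<^sup>2\<close>; both sides sum to one, so equality holds throughout and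
  every column \<open>\<rho> e\<^sub>i\<close> is a multiple of \<open>\<psi>\<close>.\<close>

section \<open>The sequence space \<open>l2 J\<close>\<close>

lemma l2_zero: "(\<lambda>_. 0) \<in> l2 J"
  by (simp add: l2_def)

lemma basis_vec_in_l2:
  assumes "j \<in> J" shows "basis_vec j \<in> l2 J"
proof -
  have "(\<lambda>i. (cmod (basis_vec j i))\<^sup>2) summable_on J \<longleftrightarrow> (\<lambda>i. (cmod (basis_vec j i))\<^sup>2) summable_on {j}"
    by (rule summable_on_cong_neutral) (auto simp: basis_vec_def assms)
  then show ?thesis
    using assms by (auto simp: l2_def basis_vec_def)
qed

lemma has_sum_cinner:
  assumes "v \<in> l2 J" "w \<in> l2 J"
  shows "((\<lambda>i. cnj (v i) * w i) has_sum cinner J v w) J"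
proof -
  have sq: "(\<lambda>i. (cmod (v i))\<^sup>2 + (cmod (w i))\<^sup>2) summable_on J"
    using assms by (intro summable_on_add) (auto simp: l2_def)
  have bound: "norm (cnj (v i) * w i) \<le> (cmod (v i))\<^sup>2 + (cmod (w i))\<^sup>2" for i
  proof -
    have "2 * cmod (v i) * cmod (w i) \<le> (cmod (v i))\<^sup>2 + (cmod (w i))\<^sup>2"
      by (rule sum_squares_bound)
    moreover have "0 \<le> cmod (v i) * cmod (w i)" by simp
    ultimately show ?thesis unfolding norm_mult complex_mod_cnj by linarith
  qed
  have "(\<lambda>i. norm (cnj (v i) * w i)) summable_on J"
    by (rule summable_on_comparison_test[OF sq bound norm_ge_zero])
  then show ?thesis
    unfolding cinner_def by (rule has_sum_infsum[OF abs_summable_summable])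
qed

lemma cinner_commute: "cinner J w v = cnj (cinner J v w)"
  unfolding cinner_def infsum_cnj[symmetric] by (simp add: mult.commute)

lemma cinner_basis_vec_left:
  assumes "i \<in> J" shows "cinner J (basis_vec i) v = v i"
proof -
  have "cinner J (basis_vec i) v = infsum (\<lambda>j. cnj (basis_vec i j) * v j) {i}"
    unfolding cinner_def by (rule infsum_cong_neutral) (auto simp: basis_vec_def assms)
  then show ?thesis by (simp add: basis_vec_def)
qed

lemma cinner_basis_vec_right: "i \<in> J \<Longrightarrow> cinner J v (basis_vec i) = cnj (v i)"
  by (subst cinner_commute) (simp add: cinner_basis_vec_left)

lemma cinner_scale_right: "cinner J v (\<lambda>i. k * w i) = k * cinner J v w"
  unfolding cinner_def by (simp add: infsum_cmult_right'[symmetric] ac_simps)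

lemma cinner_scale_left: "cinner J (\<lambda>i. k * v i) w = cnj k * cinner J v w"
  unfolding cinner_def by (simp add: infsum_cmult_right'[symmetric] ac_simps)

lemma cnj_mult_self_nonneg: "0 \<le> cnj z * z"
  by (simp add: complex_norm_square[symmetric] mult.commute less_eq_complex_def)

lemma has_sum_cnj_mult_self_nonneg:
  assumes "((\<lambda>i. cnj (f i) * f i) has_sum a) A" shows "0 \<le> a"
  using infsum_nonneg_complex[OF has_sum_imp_summable[OF assms] cnj_mult_self_nonneg]
  by (simp add: infsumI[OF assms])

lemma cinner_self_nonneg: "v \<in> l2 J \<Longrightarrow> 0 \<le> cinner J v v"
  by (rule has_sum_cnj_mult_self_nonneg[OF has_sum_cinner])

lemma cinner_self_eq_1_iff_hnorm:
  assumes "v \<in> l2 J" shows "cinner J v v = 1 \<longleftrightarrow> hnorm J v = 1"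
proof -
  have "Im (cinner J v v) = 0"
    using cinner_self_nonneg[OF assms] by (simp add: less_eq_complex_def)
  then show ?thesis
    unfolding hnorm_def by (simp add: complex_eq_iff)
qed

lemma has_sum_residual:
  assumes v: "v \<in> l2 J" and \<psi>: "\<psi> \<in> l2 J" and unit: "cinner J \<psi> \<psi> = 1"
  defines "L \<equiv> cinner J \<psi> v"
  shows "((\<lambda>i. cnj (v i - L * \<psi> i) * (v i - L * \<psi> i)) has_sum (cinner J v v - cnj L * L)) J"
proof -
  have vv: "((\<lambda>i. cnj (v i) * v i) has_sum cinner J v v) J"
    by (rule has_sum_cinner[OF v v])
  have v\<psi>: "((\<lambda>i. cnj (v i) * \<psi> i) has_sum cnj L) J"
    using has_sum_cinner[OF v \<psi>] by (simp add: L_def cinner_commute[of J \<psi> v])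
  have \<psi>v: "((\<lambda>i. cnj (\<psi> i) * v i) has_sum L) J"
    unfolding L_def by (rule has_sum_cinner[OF \<psi> v])
  have \<psi>\<psi>: "((\<lambda>i. cnj (\<psi> i) * \<psi> i) has_sum 1) J"
    using has_sum_cinner[OF \<psi> \<psi>] by (simp add: unit)
  have sum: "((\<lambda>i. cnj (v i) * v i + (- L) * (cnj (v i) * \<psi> i) + (- cnj L) * (cnj (\<psi> i) * v i)
           + (cnj L * L) * (cnj (\<psi> i) * \<psi> i)) has_sum
        (cinner J v v + (- L) * cnj L + (- cnj L) * L + (cnj L * L) * 1)) J"
    by (intro has_sum_add has_sum_cmult_right vv v\<psi> \<psi>v \<psi>\<psi>)
  have total: "cinner J v v + (- L) * cnj L + (- cnj L) * L + (cnj L * L) * 1 = cinner J v v - cnj L * L"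
    by (simp add: algebra_simps)
  have summand: "cnj (v i) * v i + (- L) * (cnj (v i) * \<psi> i) + (- cnj L) * (cnj (\<psi> i) * v i)
           + (cnj L * L) * (cnj (\<psi> i) * \<psi> i) = cnj (v i - L * \<psi> i) * (v i - L * \<psi> i)" for i
    by (simp add: algebra_simps)
  show ?thesis
    using sum by (simp only: total summand)
qed

lemma bessel_inequality:
  assumes "v \<in> l2 J" "\<psi> \<in> l2 J" "cinner J \<psi> \<psi> = 1"
  shows "cnj (cinner J \<psi> v) * cinner J \<psi> v \<le> cinner J v v"
  using has_sum_cnj_mult_self_nonneg[OF has_sum_residual[OF assms]] by simp

lemma bessel_equality_imp_collinear:
  assumes v: "v \<in> l2 J" and \<psi>: "\<psi> \<in> l2 J" and unit: "cinner J \<psi> \<psi> = 1"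
    and eq: "cnj (cinner J \<psi> v) * cinner J \<psi> v = cinner J v v"
  shows "v = (\<lambda>i. cinner J \<psi> v * \<psi> i)"
proof
  fix i
  show "v i = cinner J \<psi> v * \<psi> i"
  proof (cases "i \<in> J")
    case True
    define r where "r j = v j - cinner J \<psi> v * \<psi> j" for j
    have "((\<lambda>j. cnj (r j) * r j) has_sum (cinner J v v - cnj (cinner J \<psi> v) * cinner J \<psi> v)) J"
      unfolding r_def by (rule has_sum_residual[OF v \<psi> unit])
    then have "((\<lambda>j. cnj (r j) * r j) has_sum 0) J"
      by (simp only: eq diff_self)
    from nonneg_has_sum_le_0D_complex[OF this order.refl cnj_mult_self_nonneg True]
    have "r i = 0" by simp
    then show ?thesis unfolding r_def by simp
  next
    case False
    then show ?thesis using v \<psi> by (simp add: l2_def)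
  qed
qed

section \<open>Orthogonal projections of trace one\<close>

lemma extensional_op_in_l2: "extensional_op J A \<Longrightarrow> A v \<in> l2 J"
  unfolding extensional_op_def using l2_zero[of J] by (cases "v \<in> l2 J") auto

lemma linear_op_scale:
  assumes "linear_op J A" "v \<in> l2 J"
  shows "A (\<lambda>i. k * v i) = (\<lambda>i. k * A v i)"
proof -
  have "A (\<lambda>i. k * v i + 0 * v i) = (\<lambda>i. k * A v i + 0 * A v i)"
    using assms unfolding linear_op_def by blast
  then show ?thesis by simp
qed

lemma self_adjoint_idempotent_cinner:
  assumes "extensional_op J P" "is_adjoint J P P" "P \<circ> P = P" "x \<in> l2 J"
  shows "cinner J x (P x) = cinner J (P x) (P x)"
proof -
  have "cinner J (P x) (P x) = cinner J x (P (P x))"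
    using assms extensional_op_in_l2 unfolding is_adjoint_def by blast
  also have "\<dots> = cinner J x (P x)"
    using fun_cong[OF assms(3), of x] by simp
  finally show ?thesis ..
qed

locale trace_one_projection =
  fixes J :: "nat set" and P :: op
  assumes extensional: "extensional_op J P" and linear: "linear_op J P"
    and self_adjoint: "is_adjoint J P P" and idempotent: "P \<circ> P = P"
    and trace_one: "op_trace J P = 1"
begin

abbreviation diag :: "nat \<Rightarrow> complex" where
  "diag i \<equiv> cinner J (basis_vec i) (P (basis_vec i))"

lemma in_l2: "P v \<in> l2 J"
  by (rule extensional_op_in_l2[OF extensional])

lemma idempotent_apply: "P (P v) = P v"
  using fun_cong[OF idempotent, of v] by simp

lemma adjoint_cinner: "x \<in> l2 J \<Longrightarrow> y \<in> l2 J \<Longrightarrow> cinner J (P x) y = cinner J x (P y)"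
  using self_adjoint unfolding is_adjoint_def by blast

lemma diag_eq_cinner_self: "i \<in> J \<Longrightarrow> diag i = cinner J (P (basis_vec i)) (P (basis_vec i))"
  by (rule self_adjoint_idempotent_cinner[OF extensional self_adjoint idempotent basis_vec_in_l2])

lemma has_sum_diag: "(diag has_sum 1) J"
proof -
  have sum: "infsum diag J = 1"
    using trace_one unfolding op_trace_def .
  have "diag summable_on J"
  proof (rule ccontr)
    assume "\<not> diag summable_on J"
    then have "infsum diag J = 0" by (rule infsum_not_exists)
    with sum show False by simp
  qed
  from has_sum_infsum[OF this] show ?thesis
    unfolding sum .
qed

lemma exists_unit_fixed_vector: "\<exists>\<psi>\<in>l2 J. P \<psi> = \<psi> \<and> cinner J \<psi> \<psi> = 1"
proof -
  have "\<exists>j\<in>J. diag j \<noteq> 0"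
  proof (rule ccontr)
    assume "\<not> ?thesis"
    then have "infsum diag J = 0" by (simp add: infsum_0)
    then show False using infsumI[OF has_sum_diag] by simp
  qed
  then obtain j where j: "j \<in> J" "diag j \<noteq> 0" by blast
  define s where "s = Re (diag j)"
  have "0 \<le> diag j"
    using cinner_self_nonneg[OF in_l2] diag_eq_cinner_self[OF j(1)] by simp
  then have s: "diag j = complex_of_real s" "s > 0"
    using j(2) unfolding s_def by (auto simp: less_eq_complex_def complex_eq_iff)
  define k where "k = complex_of_real (1 / sqrt s)"
  define \<psi> where "\<psi> = (\<lambda>i. k * P (basis_vec j) i)"
  have \<psi>_eq: "\<psi> = P (\<lambda>i. k * basis_vec j i)"
    unfolding \<psi>_def by (rule linear_op_scale[OF linear basis_vec_in_l2[OF j(1)], symmetric])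
  have "cnj k * k * complex_of_real s = 1"
    using s(2) unfolding k_def by (simp flip: of_real_mult)
  then have "cinner J \<psi> \<psi> = 1"
    unfolding \<psi>_def using s(1) diag_eq_cinner_self[OF j(1)]
    by (simp add: cinner_scale_left cinner_scale_right mult.assoc)
  moreover have "P \<psi> = \<psi>"
    unfolding \<psi>_eq by (rule idempotent_apply)
  moreover have "\<psi> \<in> l2 J"
    unfolding \<psi>_eq by (rule in_l2)
  ultimately show ?thesis by blast
qed

context
  fixes \<psi> assumes \<psi>: "\<psi> \<in> l2 J" and fixed: "P \<psi> = \<psi>" and unit: "cinner J \<psi> \<psi> = 1"
begin

lemma cinner_fixed_column: "i \<in> J \<Longrightarrow> cinner J \<psi> (P (basis_vec i)) = cnj (\<psi> i)"
  using adjoint_cinner[OF \<psi> basis_vec_in_l2, of i] fixed cinner_basis_vec_right[of i J \<psi>] by simp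

lemma diag_eq:
  assumes "i \<in> J" shows "diag i = cnj (\<psi> i) * \<psi> i"
proof -
  have defect_nonneg: "0 \<le> diag j - cnj (\<psi> j) * \<psi> j" if "j \<in> J" for j
    using bessel_inequality[OF in_l2 \<psi> unit, of "basis_vec j"] that
    by (simp add: cinner_fixed_column diag_eq_cinner_self mult.commute)
  have "((\<lambda>j. cnj (\<psi> j) * \<psi> j) has_sum 1) J"
    using has_sum_cinner[OF \<psi> \<psi>] unfolding unit .
  from has_sum_add[OF has_sum_diag has_sum_cmult_right[OF this, of "-1"]]
  have "((\<lambda>j. diag j - cnj (\<psi> j) * \<psi> j) has_sum 0) J"
    by simp
  from nonneg_has_sum_le_0D_complex[OF this order.refl defect_nonneg assms]
  show ?thesis by simp
qed

lemma column_eq: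
  assumes "i \<in> J" shows "P (basis_vec i) = (\<lambda>j. cnj (\<psi> i) * \<psi> j)"
proof -
  have "cnj (cinner J \<psi> (P (basis_vec i))) * cinner J \<psi> (P (basis_vec i))
      = cinner J (P (basis_vec i)) (P (basis_vec i))"
    using diag_eq[OF assms] diag_eq_cinner_self[OF assms] cinner_fixed_column[OF assms]
    by (simp add: mult.commute)
  from bessel_equality_imp_collinear[OF in_l2 \<psi> unit this]
  show ?thesis
    using cinner_fixed_column[OF assms] by simp
qed

lemma eq_rank_one: "P = (\<lambda>\<phi>. if \<phi> \<in> l2 J then (\<lambda>i. cinner J \<psi> \<phi> * \<psi> i) else (\<lambda>_. 0))"
proof (intro ext)
  fix \<phi> i
  show "P \<phi> i = (if \<phi> \<in> l2 J then (\<lambda>i. cinner J \<psi> \<phi> * \<psi> i) else (\<lambda>_. 0)) i"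
  proof (cases "\<phi> \<in> l2 J \<and> i \<in> J")
    case True
    have "P \<phi> i = cinner J (basis_vec i) (P \<phi>)"
      using cinner_basis_vec_left[of i J "P \<phi>"] True by simp
    also have "\<dots> = cinner J (P (basis_vec i)) \<phi>"
      using adjoint_cinner[OF basis_vec_in_l2, of i \<phi>] True by simp
    also have "\<dots> = \<psi> i * cinner J \<psi> \<phi>"
      using True by (simp add: column_eq cinner_scale_left)
    finally show ?thesis
      using True by (simp add: mult.commute)
  next
    case False
    then show ?thesis
      using extensional in_l2[of \<phi>] \<psi> by (auto simp: extensional_op_def l2_def)
  qed
qed

end

lemma rank_one: "rank_one_projection J P"
proof -
  obtain \<psi> where \<psi>: "\<psi> \<in> l2 J" "P \<psi> = \<psi>" "cinner J \<psi> \<psi> = 1"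
    using exists_unit_fixed_vector by blast
  then show ?thesis
    unfolding rank_one_projection_def
    using eq_rank_one[OF \<psi>] cinner_self_eq_1_iff_hnorm[OF \<psi>(1)] by blast
qed

end

lemma rank_one_projection_idempotent:
  assumes "rank_one_projection J P" shows "P \<circ> P = P"
proof
  obtain \<psi> where \<psi>: "\<psi> \<in> l2 J" "cinner J \<psi> \<psi> = 1"
    and P: "P = (\<lambda>\<phi>. if \<phi> \<in> l2 J then (\<lambda>i. cinner J \<psi> \<phi> * \<psi> i) else (\<lambda>_. 0))"
    using assms cinner_self_eq_1_iff_hnorm unfolding rank_one_projection_def by blast
  have multiple_in_l2: "(\<lambda>i. L * \<psi> i) \<in> l2 J" for L
  proof -
    have "(\<lambda>i. (cmod L)\<^sup>2 * (cmod (\<psi> i))\<^sup>2) summable_on J"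
      using \<psi>(1) unfolding l2_def by (intro summable_on_cmult_right) auto
    then show ?thesis
      using \<psi>(1) unfolding l2_def by (simp add: norm_mult power_mult_distrib)
  qed
  fix x
  show "(P \<circ> P) x = P x"
  proof (cases "x \<in> l2 J")
    case True
    then show ?thesis
      using multiple_in_l2 \<psi>(2) by (simp add: P cinner_scale_right)
  next
    case False
    have "cinner J \<psi> (\<lambda>_. 0) = 0"
      unfolding cinner_def by simp
    then show ?thesis
      using False l2_zero by (simp add: P)
  qed
qed

lemma pure_state_iff_trace_one_projection:
  assumes "extensional_op J \<rho>" "linear_op J \<rho>"
  shows "density_operator J \<rho> \<and> rank_one_projection J \<rho> \<longleftrightarrow>
    is_adjoint J \<rho> \<rho> \<and> \<rho> \<circ> \<rho> = \<rho> \<and> op_trace J \<rho> = 1"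
proof
  assume "density_operator J \<rho> \<and> rank_one_projection J \<rho>"
  then show "is_adjoint J \<rho> \<rho> \<and> \<rho> \<circ> \<rho> = \<rho> \<and> op_trace J \<rho> = 1"
    using rank_one_projection_idempotent unfolding density_operator_def by blast
next
  assume proj: "is_adjoint J \<rho> \<rho> \<and> \<rho> \<circ> \<rho> = \<rho> \<and> op_trace J \<rho> = 1"
  then interpret trace_one_projection J \<rho>
    using assms by unfold_locales auto
  have "0 \<le> cinner J x (\<rho> x)" if "x \<in> l2 J" for x
    using self_adjoint_idempotent_cinner[OF extensional self_adjoint idempotent that]
      cinner_self_nonneg[OF in_l2] by simp
  then have "Im (cinner J x (\<rho> x)) = 0 \<and> Re (cinner J x (\<rho> x)) \<ge> 0" if "x \<in> l2 J" for x
    using that unfolding less_eq_complex_def by auto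
  then show "density_operator J \<rho> \<and> rank_one_projection J \<rho>"
    using proj rank_one unfolding density_operator_def by blast
qed

lemma op_trace_smult_op: "op_trace J (smult_op k A) = k * op_trace J A"
  unfolding op_trace_def smult_op_def by (simp add: cinner_scale_right infsum_cmult_right')

lemma smult_op_smult_op: "smult_op a (smult_op b A) = smult_op (a * b) A"
  unfolding smult_op_def by (simp add: mult.assoc)

lemma smult_op_cancel:
  assumes "k \<noteq> 0" shows "smult_op k A = smult_op k B \<longleftrightarrow> A = B"
proof
  assume "smult_op k A = smult_op k B"
  then have "smult_op (1 / k) (smult_op k A) = smult_op (1 / k) (smult_op k B)" by simp
  then show "A = B"
    using assms by (simp add: smult_op_smult_op smult_op_def)
qed simp

lemma smult_op_comp_smult_op:
  assumes "linear_op J A" "extensional_op J B"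
  shows "smult_op a A \<circ> smult_op b B = smult_op (a * b) (A \<circ> B)"
proof
  fix x
  have "A (\<lambda>i. b * B x i) = (\<lambda>i. b * A (B x) i)"
    by (rule linear_op_scale[OF assms(1) extensional_op_in_l2[OF assms(2)]])
  then show "(smult_op a A \<circ> smult_op b B) x = smult_op (a * b) (A \<circ> B) x"
    unfolding smult_op_def by (simp add: mult.assoc)
qed

lemma is_adjoint_smult_op_of_real:
  "is_adjoint J A B \<Longrightarrow> is_adjoint J (smult_op (of_real r) A) (smult_op (of_real r) B)"
  unfolding is_adjoint_def smult_op_def by (simp add: cinner_scale_left cinner_scale_right)

lemma is_adjoint_smult_op_of_real_iff:
  assumes "r \<noteq> 0"
  shows "is_adjoint J (smult_op (of_real r) A) (smult_op (of_real r) A) \<longleftrightarrow> is_adjoint J A A"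
proof
  assume "is_adjoint J (smult_op (of_real r) A) (smult_op (of_real r) A)"
  from is_adjoint_smult_op_of_real[OF this, of "1 / r"]
  show "is_adjoint J A A"
    using assms by (simp add: smult_op_smult_op smult_op_def flip: of_real_mult)
qed (rule is_adjoint_smult_op_of_real)

section \<open>The Stratonovich--Weyl correspondence\<close>

locale stratonovich_weyl =
  fixes J :: "nat set" and AH :: "op set" and FA :: "('m \<Rightarrow> complex) set"
    and star :: "('m \<Rightarrow> complex) \<Rightarrow> ('m \<Rightarrow> complex) \<Rightarrow> ('m \<Rightarrow> complex)"
    and \<mu> :: "'m measure" and t :: "'m \<Rightarrow> real" and h :: real and n :: nat
    and SW :: "op \<Rightarrow> ('m \<Rightarrow> complex)"
  assumes setting: "SW_setting J AH FA star \<mu> t h n SW"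
begin

definition \<kappa> :: complex where
  "\<kappa> = complex_of_real (1 / (2 * pi * h) ^ n)"

lemma \<kappa>_nonzero: "\<kappa> \<noteq> 0"
  using setting unfolding SW_setting_def \<kappa>_def by simp

lemma extensional: "A \<in> AH \<Longrightarrow> extensional_op J A"
  and linear: "A \<in> AH \<Longrightarrow> linear_op J A"
  and smult_op_closed: "A \<in> AH \<Longrightarrow> smult_op c A \<in> AH"
  and comp_closed: "A \<in> AH \<Longrightarrow> B \<in> AH \<Longrightarrow> A \<circ> B \<in> AH"
  and adjoint_exists: "A \<in> AH \<Longrightarrow> \<exists>B\<in>AH. is_adjoint J A B"
  and SW_bij: "bij_betw SW AH FA"
  and SW_smult_op: "A \<in> AH \<Longrightarrow> SW (smult_op c A) = (\<lambda>x. c * SW A x)"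
  and SW_adjoint: "A \<in> AH \<Longrightarrow> B \<in> AH \<Longrightarrow> is_adjoint J A B \<Longrightarrow> SW B = (\<lambda>x. cnj (SW A x))"
  and SW_comp: "A \<in> AH \<Longrightarrow> B \<in> AH \<Longrightarrow> SW (A \<circ> B) = star (SW A) (SW B)"
  and SW_self_adjoint_real: "A \<in> AH \<Longrightarrow> is_adjoint J A A \<Longrightarrow> Im (SW A x) = 0"
  and SW_trace: "A \<in> AH \<Longrightarrow> op_trace J A = \<kappa> * (LINT x|\<mu>. SW A x * complex_of_real (t x))"
  using setting unfolding SW_setting_def \<kappa>_def by blast+

lemma SW_inj: "A \<in> AH \<Longrightarrow> B \<in> AH \<Longrightarrow> SW A = SW B \<Longrightarrow> A = B"
  using SW_bij unfolding bij_betw_def inj_on_def by blast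

lemma self_adjoint_iff_SW_real:
  assumes A: "A \<in> AH" shows "is_adjoint J A A \<longleftrightarrow> (\<forall>x. Im (SW A x) = 0)"
proof
  assume real: "\<forall>x. Im (SW A x) = 0"
  obtain B where B: "B \<in> AH" "is_adjoint J A B"
    using adjoint_exists[OF A] by blast
  have "SW B = SW A"
    using SW_adjoint[OF A B] real by (simp add: fun_eq_iff complex_eq_iff)
  then show "is_adjoint J A A"
    using SW_inj[OF B(1) A] B(2) by simp
qed (use SW_self_adjoint_real[OF A] in blast)

lemma FA_eq_SW_scaled: "W \<in> FA \<Longrightarrow> \<exists>\<rho>\<in>AH. W = SW (smult_op \<kappa> \<rho>)"
proof -
  assume "W \<in> FA"
  then obtain A where A: "A \<in> AH" "W = SW A"
    using SW_bij unfolding bij_betw_def by blast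
  have "smult_op \<kappa> (smult_op (1 / \<kappa>) A) = A"
    using \<kappa>_nonzero by (simp add: smult_op_smult_op smult_op_def)
  then show ?thesis
    using A smult_op_closed by metis
qed

context
  fixes \<rho> W assumes \<rho>: "\<rho> \<in> AH" and W: "W = SW (smult_op \<kappa> \<rho>)"
begin

lemma represents_pure_state_iff:
  "represents_pure_state J AH h n SW W \<longleftrightarrow> density_operator J \<rho> \<and> rank_one_projection J \<rho>"
proof -
  have "\<rho>' = \<rho>" if "\<rho>' \<in> AH" "W = SW (smult_op \<kappa> \<rho>')" for \<rho>'
  proof -
    have "SW (smult_op \<kappa> \<rho>') = SW (smult_op \<kappa> \<rho>)"
      by (simp only: W[symmetric] that(2)[symmetric])
    then have "smult_op \<kappa> \<rho>' = smult_op \<kappa> \<rho>"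
      by (rule SW_inj[OF smult_op_closed[OF that(1)] smult_op_closed[OF \<rho>]])
    then show ?thesis
      using smult_op_cancel[OF \<kappa>_nonzero] by blast
  qed
  then show ?thesis
    unfolding represents_pure_state_def \<kappa>_def[symmetric] using \<rho> W by blast
qed

lemma real_iff_self_adjoint: "(\<forall>x. Im (W x) = 0) \<longleftrightarrow> is_adjoint J \<rho> \<rho>"
proof -
  have "is_adjoint J (smult_op \<kappa> \<rho>) (smult_op \<kappa> \<rho>) \<longleftrightarrow> is_adjoint J \<rho> \<rho>"
    unfolding \<kappa>_def by (rule is_adjoint_smult_op_of_real_iff) (use \<kappa>_nonzero in \<open>simp add: \<kappa>_def\<close>)
  then show ?thesis
    using self_adjoint_iff_SW_real[OF smult_op_closed[OF \<rho>]] W by simp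
qed

lemma star_square_iff_idempotent: "star W W = (\<lambda>x. \<kappa> * W x) \<longleftrightarrow> \<rho> \<circ> \<rho> = \<rho>"
proof -
  have "star W W = SW (smult_op \<kappa> \<rho> \<circ> smult_op \<kappa> \<rho>)"
    using W SW_comp[OF smult_op_closed[OF \<rho>] smult_op_closed[OF \<rho>]] by simp
  also have "\<dots> = SW (smult_op (\<kappa> * \<kappa>) (\<rho> \<circ> \<rho>))"
    by (simp only: smult_op_comp_smult_op[OF linear[OF \<rho>] extensional[OF \<rho>]])
  finally have "star W W = SW (smult_op (\<kappa> * \<kappa>) (\<rho> \<circ> \<rho>))" .
  moreover have "(\<lambda>x. \<kappa> * W x) = SW (smult_op (\<kappa> * \<kappa>) \<rho>)"
    using W SW_smult_op[OF smult_op_closed[OF \<rho>]] by (simp add: smult_op_smult_op)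
  moreover have "smult_op (\<kappa> * \<kappa>) (\<rho> \<circ> \<rho>) = smult_op (\<kappa> * \<kappa>) \<rho> \<longleftrightarrow> \<rho> \<circ> \<rho> = \<rho>"
    using \<kappa>_nonzero by (simp add: smult_op_cancel)
  ultimately show ?thesis
    using SW_inj smult_op_closed comp_closed \<rho> by metis
qed

lemma integral_eq_trace: "(LINT x|\<mu>. W x * complex_of_real (t x)) = op_trace J \<rho>"
proof -
  have "\<kappa> * (LINT x|\<mu>. W x * complex_of_real (t x)) = \<kappa> * op_trace J \<rho>"
    using SW_trace[OF smult_op_closed[OF \<rho>]] W by (simp add: op_trace_smult_op)
  then show ?thesis
    using \<kappa>_nonzero by simp
qed

end

end

theorem theorem3p4:
  fixes J :: "nat set" and AH :: "op set" and FA :: "('m \<Rightarrow> complex) set"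
    and star :: "('m \<Rightarrow> complex) \<Rightarrow> ('m \<Rightarrow> complex) \<Rightarrow> ('m \<Rightarrow> complex)"
    and \<mu> :: "'m measure" and t :: "'m \<Rightarrow> real" and h :: real and n :: nat
    and SW :: "op \<Rightarrow> ('m \<Rightarrow> complex)" and W :: "'m \<Rightarrow> complex"
  assumes "SW_setting J AH FA star \<mu> t h n SW"
    and "W \<in> FA"
  shows "represents_pure_state J AH h n SW W \<longleftrightarrow>
     ((LINT x|\<mu>. star W W x * complex_of_real (t x)) = complex_of_real (1 / (2 * pi * h) ^ n)
      \<and> (\<forall>x. Im (W x) = 0)
      \<and> star W W = (\<lambda>x. complex_of_real (1 / (2 * pi * h) ^ n) * W x)
      \<and> (LINT x|\<mu>. W x * complex_of_real (t x)) = 1)"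
proof -
  interpret stratonovich_weyl J AH FA star \<mu> t h n SW
    by (rule stratonovich_weyl.intro) (rule assms(1))
  obtain \<rho> where \<rho>: "\<rho> \<in> AH" and W: "W = SW (smult_op \<kappa> \<rho>)"
    using FA_eq_SW_scaled[OF assms(2)] by blast
  \<comment> \<open>Condition (i) is redundant: given (iii), its integrand is \<open>\<kappa>\<close> times that of (iv).\<close>
  have "star W W = (\<lambda>x. \<kappa> * W x) \<Longrightarrow>
      (LINT x|\<mu>. star W W x * complex_of_real (t x)) = \<kappa> * (LINT x|\<mu>. W x * complex_of_real (t x))"
    by (simp add: mult.assoc)
  then show ?thesis
    unfolding \<kappa>_def[symmetric]
    using represents_pure_state_iff[OF \<rho> W] pure_state_iff_trace_one_projection[OF extensional[OF \<rho>] linear[OF \<rho>]]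
      real_iff_self_adjoint[OF \<rho> W] star_square_iff_idempotent[OF \<rho> W] integral_eq_trace[OF \<rho> W]
    by auto
qed

end
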